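(* Let $n$ and $m$ be integers with $n\geq 5$ and $m\geq 5$. For each $G\in T_{n,m}$ whose terminals $s$ and $t$ are true twins and which has at least one $3$-irrelevant edge, there exists $H\in T_{n,m}^*$ that is $3$-stronger than $G$.
   Context: All graphs are finite, simple and undirected. A two-terminal graph is a graph $G$ together with two distinguished vertices $s,t$ (the terminals). $T_{n,m}$ denotes the set of all pairwise nonisomorphic (with isomorphisms preserving the set of terminals) two-terminal graphs with $n$ vertices and $m$ edges. Two vertices $u,v$ are true twins if $N[u]=N[v]$ (closed neighborhoods). For a positive integer $d$, a $d$-pathset of a two-terminal graph $G$ is a spanning subgraph of $G$ containing a path of length (number of edges) at most $d$ joining $s$ and $t$; $N_i^d(G)$ is the number of $d$-pathsets of $G$ with exactly $i$ edges. An edge $e$ of $G$ is $d$-irrelevant if for every $d$-pathset $H$ of $G$ containing $e$, $H-e$ is also a $d$-pathset. $T_{n,m}^*$ is the set of graphs in $T_{n,m}$ with no $3$-irrelevant edges whose terminals are true twins. For $G,H\in T_{n,m}$, $H$ is $d$-stronger than $G$ if $N_i^d(H)\geq N_i^d(G)$ for every $i\in\{1,\ldots,m\}$ and $N_j^d(H)>N_j^d(G)$ for some $j\in\{1,\ldots,m\}$. *)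

theory Defs
  imports Main
begin

definition tt_graph :: "'a set \<Rightarrow> 'a set set \<Rightarrow> 'a \<Rightarrow> 'a \<Rightarrow> bool" where
  "tt_graph V E s t \<longleftrightarrow> finite V \<and> (\<forall>e\<in>E. \<exists>u v. e = {u, v} \<and> u \<noteq> v \<and> u \<in> V \<and> v \<in> V)
     \<and> s \<in> V \<and> t \<in> V \<and> s \<noteq> t"

definition closed_nbhd :: "'a set \<Rightarrow> 'a set set \<Rightarrow> 'a \<Rightarrow> 'a set" where
  "closed_nbhd V E v = insert v {u \<in> V. {u, v} \<in> E}"

definition true_twins :: "'a set \<Rightarrow> 'a set set \<Rightarrow> 'a \<Rightarrow> 'a \<Rightarrow> bool" where
  "true_twins V E u v \<longleftrightarrow> closed_nbhd V E u = closed_nbhd V E v"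

definition has_short_path :: "'a set set \<Rightarrow> 'a \<Rightarrow> 'a \<Rightarrow> nat \<Rightarrow> bool" where
  "has_short_path F s t d \<longleftrightarrow> (\<exists>ps. ps \<noteq> [] \<and> hd ps = s \<and> last ps = t \<and> distinct ps
      \<and> length ps - 1 \<le> d \<and> (\<forall>i. Suc i < length ps \<longrightarrow> {ps ! i, ps ! Suc i} \<in> F))"

text \<open>A d-pathset of (V,E,s,t) is a spanning subgraph, identified with its edge set F \<subseteq> E,
  containing an s-t path of length at most d.\<close>
definition is_pathset :: "nat \<Rightarrow> 'a set set \<Rightarrow> 'a \<Rightarrow> 'a \<Rightarrow> 'a set set \<Rightarrow> bool" where
  "is_pathset d E s t F \<longleftrightarrow> F \<subseteq> E \<and> has_short_path F s t d"

definition N_count :: "nat \<Rightarrow> 'a set set \<Rightarrow> 'a \<Rightarrow> 'a \<Rightarrow> nat \<Rightarrow> nat" where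
  "N_count d E s t i = card {F. is_pathset d E s t F \<and> card F = i}"

definition irrelevant_edge :: "nat \<Rightarrow> 'a set set \<Rightarrow> 'a \<Rightarrow> 'a \<Rightarrow> 'a set \<Rightarrow> bool" where
  "irrelevant_edge d E s t e \<longleftrightarrow> e \<in> E \<and>
     (\<forall>F. is_pathset d E s t F \<and> e \<in> F \<longrightarrow> is_pathset d E s t (F - {e}))"

definition stronger :: "nat \<Rightarrow> nat \<Rightarrow> 'a set set \<Rightarrow> 'a \<Rightarrow> 'a \<Rightarrow> 'a set set \<Rightarrow> 'a \<Rightarrow> 'a \<Rightarrow> bool" where
  "stronger d m E2 s2 t2 E1 s1 t1 \<longleftrightarrow>
     (\<forall>i\<in>{1..m}. N_count d E2 s2 t2 i \<ge> N_count d E1 s1 t1 i) \<and>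
     (\<exists>j\<in>{1..m}. N_count d E2 s2 t2 j > N_count d E1 s1 t1 j)"

end

theory Submission
  imports Defs
begin

text \<open>
  If the terminals s and t are adjacent true twins, an s-t walk with at most three edges
  is s-t, s-x-t or s-x-y-t, so the 3-irrelevant edges are exactly the edges avoiding s and t
  that do not lie inside the common neighbourhood A of s and t.
  Each irrelevant edge can be eliminated by a move that keeps the vertex set, the number
  of edges and the twin property, shrinks the set of irrelevant edges, and admits a
  size-preserving injection from the old pathsets into the new ones that misses some
  pathset.  If two vertices of A are non-adjacent, an irrelevant edge is replaced by the
  edge joining them.  Otherwise pick an end w of an irrelevant edge e outside A and
  replace e and a second edge f by sw and tw, where f is either another irrelevant edge or
  an edge uv of the clique A; in the latter case the pathsets that needed uv are rerouted
  through w.  When no move applies the graph has at most four edges, so with m \<ge> 5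
  the moves can be iterated until no irrelevant edge is left.
\<close>

section \<open>Walks of length at most three\<close>

definition walk3 :: "'a set set \<Rightarrow> 'a \<Rightarrow> 'a \<Rightarrow> bool" where
  "walk3 F s t \<longleftrightarrow> {s,t} \<in> F \<or> (\<exists>x. {s,x} \<in> F \<and> {x,t} \<in> F)
     \<or> (\<exists>x y. {s,x} \<in> F \<and> {x,y} \<in> F \<and> {y,t} \<in> F)"

lemma walk3_mono: "walk3 F s t \<Longrightarrow> F \<subseteq> G \<Longrightarrow> walk3 G s t"
  unfolding walk3_def by blast

lemma walk3_two_edges: "walk3 {{s,x},{x,t}} s t"
  unfolding walk3_def by blast

lemma walk3_three_edges: "walk3 {{s,x},{x,y},{y,t}} s t"
  unfolding walk3_def by blast

lemma walk3_singleton: "s \<noteq> t \<Longrightarrow> walk3 {g} s t \<longleftrightarrow> g = {s,t}"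
  unfolding walk3_def by (auto simp: doubleton_eq_iff)

lemma walk3_edge_at_ends:
  assumes "walk3 F s t"
  shows "\<exists>z\<in>F. s \<in> z" "\<exists>z\<in>F. t \<in> z"
  using assms unfolding walk3_def by blast+

lemma not_walk3_pendant_edges:
  "a \<noteq> b \<Longrightarrow> a \<noteq> t \<Longrightarrow> b \<noteq> s \<Longrightarrow> s \<noteq> t \<Longrightarrow> \<not> walk3 {{s,a},{b,t}} s t"
  unfolding walk3_def by (auto simp: doubleton_eq_iff)

lemma walk3_through_edge:
  assumes "walk3 F s t" "u \<noteq> s" "u \<noteq> t" "v \<noteq> s" "v \<noteq> t"
  shows "walk3 (F - {{u,v}}) s t \<or> ({s,u} \<in> F \<and> {v,t} \<in> F) \<or> ({s,v} \<in> F \<and> {u,t} \<in> F)"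
  using assms unfolding walk3_def by (auto simp: doubleton_eq_iff)

lemma walk3_if_has_short_path_3:
  assumes "has_short_path F s t 3" "s \<noteq> t"
  shows "walk3 F s t"
proof -
  obtain ps where ps: "ps \<noteq> []" "hd ps = s" "last ps = t" "length ps \<le> 4"
     and edge: "\<And>i. Suc i < length ps \<Longrightarrow> {ps ! i, ps ! Suc i} \<in> F"
    using assms(1) unfolding has_short_path_def by fastforce
  consider a where "ps = [a]" | a b where "ps = [a,b]" | a b c where "ps = [a,b,c]"
    | a b c d where "ps = [a,b,c,d]"
    using ps(1,4) by (auto simp: length_Suc_conv le_Suc_eq numeral_eq_Suc)
  then show ?thesis
  proof cases
    case 1 then show ?thesis using ps assms(2) by simp
  next
    case 2 then show ?thesis using ps edge[of 0] unfolding walk3_def by simp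
  next
    case 3 then show ?thesis using ps edge[of 0] edge[of 1] unfolding walk3_def by auto
  next
    case 4 then show ?thesis using ps edge[of 0] edge[of 1] edge[of 2] unfolding walk3_def by auto
  qed
qed

lemma has_short_path_3_if_walk3:
  assumes "walk3 F s t" "s \<noteq> t"
  shows "has_short_path F s t 3"
proof -
  have one: "has_short_path F s t 3" if "{s,t} \<in> F"
    unfolding has_short_path_def
    using that assms(2) by (intro exI[of _ "[s,t]"]) (auto simp: less_Suc_eq)
  have two: "has_short_path F s t 3" if "{s,x} \<in> F" "{x,t} \<in> F" for x
  proof (cases "x = s \<or> x = t")
    case True then show ?thesis using one that by auto
  next
    case False then show ?thesis
      unfolding has_short_path_def using that assms(2)
      by (intro exI[of _ "[s,x,t]"]) (auto simp: less_Suc_eq nth_Cons split: nat.splits)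
  qed
  have three: "has_short_path F s t 3" if "{s,x} \<in> F" "{x,y} \<in> F" "{y,t} \<in> F" for x y
  proof (cases "x = s \<or> y = t \<or> x = y \<or> x = t \<or> y = s")
    case True then show ?thesis using one two that by (auto simp: insert_commute)
  next
    case False then show ?thesis
      unfolding has_short_path_def using that assms(2)
      by (intro exI[of _ "[s,x,y,t]"]) (auto simp: less_Suc_eq nth_Cons split: nat.splits)
  qed
  show ?thesis using assms(1) one two three unfolding walk3_def by blast
qed

lemma tt_graph_edgeD:
  assumes "tt_graph V E s t" "{a,b} \<in> E"
  shows "a \<in> V" "b \<in> V" "a \<noteq> b"
proof -
  obtain u v where "{a,b} = {u,v}" "u \<noteq> v" "u \<in> V" "v \<in> V"
    using assms unfolding tt_graph_def by blast
  then show "a \<in> V" "b \<in> V" "a \<noteq> b" by (auto simp: doubleton_eq_iff)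
qed

lemma tt_graph_finite_edges: "tt_graph V E s t \<Longrightarrow> finite E"
proof -
  assume G: "tt_graph V E s t"
  have "e \<in> Pow V" if "e \<in> E" for e
    using G that unfolding tt_graph_def by fastforce
  moreover have "finite V" using G unfolding tt_graph_def by blast
  ultimately show "finite E" by (meson finite_Pow_iff finite_subset subsetI)
qed

lemma tt_graph_subset: "tt_graph V E s t \<Longrightarrow> E' \<subseteq> E \<Longrightarrow> tt_graph V E' s t"
  unfolding tt_graph_def by blast

lemma tt_graph_insert_edge:
  assumes "tt_graph V E s t" "a \<in> V" "b \<in> V" "a \<noteq> b"
  shows "tt_graph V (insert {a,b} E) s t"
  using assms unfolding tt_graph_def by blast

lemma is_pathset_3_iff:
  assumes "tt_graph V E s t"
  shows "is_pathset 3 E s t F \<longleftrightarrow> F \<subseteq> E \<and> walk3 F s t"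
proof -
  have "s \<noteq> t" using assms unfolding tt_graph_def by blast
  then show ?thesis
    using walk3_if_has_short_path_3[of F s t] has_short_path_3_if_walk3[of F s t]
    unfolding is_pathset_def by blast
qed

section \<open>Twin terminals and irrelevant edges\<close>

definition twins :: "'a set set \<Rightarrow> 'a \<Rightarrow> 'a \<Rightarrow> bool" where
  "twins E s t \<longleftrightarrow> {s,t} \<in> E \<and> (\<forall>x. x \<noteq> s \<longrightarrow> x \<noteq> t \<longrightarrow> ({s,x} \<in> E \<longleftrightarrow> {t,x} \<in> E))"

lemma true_twins_iff_twins:
  assumes "tt_graph V E s t"
  shows "true_twins V E s t \<longleftrightarrow> twins E s t"
proof -
  have st: "s \<noteq> t" "s \<in> V" "t \<in> V" using assms unfolding tt_graph_def by blast+
  have V: "{a,b} \<in> E \<Longrightarrow> a \<in> V \<and> b \<in> V" for a b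
    using tt_graph_edgeD[OF assms] by blast
  have nbhd: "x \<in> closed_nbhd V E a \<longleftrightarrow> x = a \<or> {a,x} \<in> E" for a x
    unfolding closed_nbhd_def using V by (auto simp: insert_commute)
  show ?thesis
  proof
    assume "true_twins V E s t"
    then have "x = s \<or> {s,x} \<in> E \<longleftrightarrow> x = t \<or> {t,x} \<in> E" for x
      unfolding true_twins_def using nbhd by blast
    then show "twins E s t" unfolding twins_def using st by (metis insert_commute)
  next
    assume "twins E s t"
    then have "x = s \<or> {s,x} \<in> E \<longleftrightarrow> x = t \<or> {t,x} \<in> E" for x
      unfolding twins_def by (metis insert_commute)
    then show "true_twins V E s t"
      unfolding true_twins_def using nbhd by blast
  qed
qed

definition twin_nbhd :: "'a set set \<Rightarrow> 'a \<Rightarrow> 'a \<Rightarrow> 'a set" where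
  "twin_nbhd E s t = {x. {s,x} \<in> E \<and> x \<noteq> t}"

definition irr_edges :: "'a set set \<Rightarrow> 'a \<Rightarrow> 'a \<Rightarrow> 'a set set" where
  "irr_edges E s t = {e \<in> E. s \<notin> e \<and> t \<notin> e \<and> \<not> e \<subseteq> twin_nbhd E s t}"

lemma twin_nbhdD:
  assumes "tt_graph V E s t" "twins E s t" "x \<in> twin_nbhd E s t"
  shows "x \<in> V" "x \<noteq> s" "x \<noteq> t" "{s,x} \<in> E" "{x,t} \<in> E"
proof -
  show sx: "{s,x} \<in> E" "x \<noteq> t" using assms(3) unfolding twin_nbhd_def by auto
  show "x \<in> V" "x \<noteq> s" using tt_graph_edgeD[OF assms(1) sx(1)] by auto
  then show "{x,t} \<in> E" using assms(2) sx unfolding twins_def by (auto simp: insert_commute)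
qed

lemma walk3_remove_irr_edge:
  assumes "twins E s t" "F \<subseteq> E" "e \<in> irr_edges E s t" "walk3 F s t"
  shows "walk3 (F - {e}) s t"
proof -
  have e: "s \<notin> e" "t \<notin> e" "\<not> e \<subseteq> twin_nbhd E s t"
    using assms(3) unfolding irr_edges_def by auto
  have "e \<noteq> {x,y}" if "{s,x} \<in> E" "{y,t} \<in> E" for x y
  proof
    assume "e = {x,y}"
    then have "x \<noteq> t" "y \<noteq> s" "y \<noteq> t" "{s,y} \<in> E" using e that assms(1)
      unfolding twins_def by (auto simp: insert_commute)
    then show False using e that \<open>e = {x,y}\<close> unfolding twin_nbhd_def by auto
  qed
  then show ?thesis using assms(2,4) e unfolding walk3_def by blast
qed

lemma twin_graph_edge_cases:
  assumes "tt_graph V E s t" "twins E s t" "z \<in> E"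
  obtains "z = {s,t}"
    | x where "x \<in> twin_nbhd E s t" "z = {s,x} \<or> z = {t,x}"
    | "z \<subseteq> twin_nbhd E s t"
    | "z \<in> irr_edges E s t"
proof -
  obtain a b where z: "z = {a,b}" "a \<noteq> b"
    using assms(1,3) unfolding tt_graph_def by blast
  consider "z = {s,t}" | "z \<noteq> {s,t}" "s \<in> z" | "z \<noteq> {s,t}" "t \<in> z" | "s \<notin> z" "t \<notin> z"
    by blast
  then show ?thesis
  proof cases
    case 2
    then obtain x where "z = {s,x}" "x \<noteq> t" using z by auto
    moreover then have "x \<in> twin_nbhd E s t" using assms(3) unfolding twin_nbhd_def by simp
    ultimately show ?thesis using that by blast
  next
    case 3
    then obtain x where x: "z = {t,x}" "x \<noteq> s" using z by auto
    moreover have "x \<noteq> t" using x z by auto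
    then have "x \<in> twin_nbhd E s t"
      using x assms(2,3) unfolding twins_def twin_nbhd_def by blast
    ultimately show ?thesis using that by blast
  qed (use that assms(3) in \<open>auto simp: irr_edges_def\<close>)
qed

lemma relevant_edge_witness:
  assumes G: "tt_graph V E s t" and tw: "twins E s t"
    and e: "e \<in> E" "e \<notin> irr_edges E s t"
  obtains F where "F \<subseteq> E" "walk3 F s t" "e \<in> F" "\<not> walk3 (F - {e}) s t"
proof -
  have st: "s \<noteq> t" using G unfolding tt_graph_def by blast
  from G tw e(1) show ?thesis
  proof (cases rule: twin_graph_edge_cases)
    case 1
    then show ?thesis using that[of "{e}"] e(1) st by (simp add: walk3_singleton walk3_def)
  next
    case (2 x)
    note x = twin_nbhdD[OF G tw 2(1)]
    have "{s,x} \<noteq> {x,t}" using st by (auto simp: doubleton_eq_iff)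
    then have diff: "{{s,x},{x,t}} - {{s,x}} = {{x,t}}" "{{s,x},{x,t}} - {{x,t}} = {{s,x}}"
      by auto
    have no_walk: "\<not> walk3 {{s,x}} s t" "\<not> walk3 {{x,t}} s t"
      using x(2,3) st by (simp_all add: walk3_singleton doubleton_eq_iff)
    have ex: "e = {s,x} \<or> e = {x,t}" using 2(2) by (metis insert_commute)
    show ?thesis
    proof (rule that[of "{{s,x},{x,t}}"])
      show "{{s,x},{x,t}} \<subseteq> E" using x(4,5) by simp
      show "walk3 {{s,x},{x,t}} s t" by (rule walk3_two_edges)
      show "e \<in> {{s,x},{x,t}}" using ex by blast
      show "\<not> walk3 ({{s,x},{x,t}} - {e}) s t" using ex diff no_walk by metis
    qed
  next
    case 3
    obtain a b where ab: "e = {a,b}" "a \<noteq> b" using G e(1) unfolding tt_graph_def by blast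
    then have "a \<in> twin_nbhd E s t" "b \<in> twin_nbhd E s t" using 3 by auto
    note a = twin_nbhdD[OF G tw this(1)] and b = twin_nbhdD[OF G tw this(2)]
    have "{a,b} \<noteq> {s,a}" "{a,b} \<noteq> {b,t}" using a b by (auto simp: doubleton_eq_iff)
    then have "{{s,a},{a,b},{b,t}} - {e} = {{s,a},{b,t}}" using ab by auto
    moreover have "\<not> walk3 {{s,a},{b,t}} s t"
      using a b ab st by (simp add: not_walk3_pendant_edges)
    moreover have "{{s,a},{a,b},{b,t}} \<subseteq> E" using a b ab e(1) by auto
    ultimately show ?thesis using that[of "{{s,a},{a,b},{b,t}}"] ab walk3_three_edges[of s a b t] by auto
  next
    case 4
    then show ?thesis using e(2) by blast
  qed
qed

lemma irrelevant_edge_in_irr_edges: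
  assumes G: "tt_graph V E s t" and tw: "twins E s t" and irr: "irrelevant_edge 3 E s t e"
  shows "e \<in> irr_edges E s t"
proof (rule ccontr)
  assume "e \<notin> irr_edges E s t"
  moreover have "e \<in> E" using irr unfolding irrelevant_edge_def by blast
  ultimately obtain F where "F \<subseteq> E" "walk3 F s t" "e \<in> F" "\<not> walk3 (F - {e}) s t"
    using relevant_edge_witness[OF G tw] by blast
  then show False using irr unfolding irrelevant_edge_def is_pathset_3_iff[OF G] by blast
qed

section \<open>Counting pathsets\<close>

definition walk_sets :: "'a set set \<Rightarrow> 'a \<Rightarrow> 'a \<Rightarrow> 'a set set set" where
  "walk_sets E s t = {F. F \<subseteq> E \<and> walk3 F s t}"

definition walk_count :: "'a set set \<Rightarrow> 'a \<Rightarrow> 'a \<Rightarrow> nat \<Rightarrow> nat" where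
  "walk_count E s t i = card {F \<in> walk_sets E s t. card F = i}"

definition walk_stronger :: "'a set set \<Rightarrow> 'a set set \<Rightarrow> 'a \<Rightarrow> 'a \<Rightarrow> bool" where
  "walk_stronger E' E s t \<longleftrightarrow> (\<forall>i. walk_count E s t i \<le> walk_count E' s t i)
     \<and> (\<exists>j. walk_count E s t j < walk_count E' s t j)"

lemma N_count_3_eq_walk_count:
  "tt_graph V E s t \<Longrightarrow> N_count 3 E s t i = walk_count E s t i"
  unfolding N_count_def walk_count_def walk_sets_def by (simp add: is_pathset_3_iff)

lemma walk_stronger_trans:
  "walk_stronger E2 E1 s t \<Longrightarrow> walk_stronger E3 E2 s t \<Longrightarrow> walk_stronger E3 E1 s t"
  unfolding walk_stronger_def by (meson le_trans order_less_le_trans)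

lemma stronger_if_walk_stronger:
  assumes G: "tt_graph V E s t" and G': "tt_graph V E' s t"
    and "card E' = m" and "walk_stronger E' E s t"
  shows "stronger 3 m E' s t E s t"
proof -
  obtain j where j: "walk_count E s t j < walk_count E' s t j"
    using assms(4) unfolding walk_stronger_def by blast
  then have "{F \<in> walk_sets E' s t. card F = j} \<noteq> {}"
    unfolding walk_count_def by (metis card.empty not_less_zero)
  then obtain F where F: "F \<subseteq> E'" "walk3 F s t" "card F = j"
    unfolding walk_sets_def by blast
  have "finite E'" using tt_graph_finite_edges[OF G'] .
  then have "finite F" "F \<noteq> {}" using F(1,2) finite_subset unfolding walk3_def by blast+
  then have "0 < card F" by (simp add: card_gt_0_iff)
  then have "j \<in> {1..m}" using F card_mono[OF \<open>finite E'\<close> F(1)] assms(3) by simp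
  then show ?thesis using j assms(4)
    unfolding stronger_def walk_stronger_def N_count_3_eq_walk_count[OF G] N_count_3_eq_walk_count[OF G']
    by blast
qed

lemma walk_stronger_by_injection:
  assumes fin: "finite E'" and inj: "inj_on \<Phi> (walk_sets E s t)"
    and into: "\<Phi> ` walk_sets E s t \<subseteq> walk_sets E' s t"
    and card: "\<And>F. F \<in> walk_sets E s t \<Longrightarrow> card (\<Phi> F) = card F"
    and F': "F' \<in> walk_sets E' s t - \<Phi> ` walk_sets E s t"
  shows "walk_stronger E' E s t"
proof -
  let ?P = "\<lambda>E i. {F \<in> walk_sets E s t. card F = i}"
  have fin': "finite (?P E' i)" for i
    using fin unfolding walk_sets_def by (auto intro: finite_subset[of _ "Pow E'"])
  have into': "\<Phi> ` ?P E i \<subseteq> ?P E' i" for i using into card by auto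
  have inj': "inj_on \<Phi> (?P E i)" for i using inj by (rule inj_on_subset) blast
  have le: "walk_count E s t i \<le> walk_count E' s t i" for i
    unfolding walk_count_def using card_inj_on_le[OF inj' into' fin'] .
  have "\<Phi> ` ?P E (card F') \<subset> ?P E' (card F')" using into'[of "card F'"] F' by blast
  then have "card (\<Phi> ` ?P E (card F')) < card (?P E' (card F'))"
    by (rule psubset_card_mono[OF fin'])
  then have "walk_count E s t (card F') < walk_count E' s t (card F')"
    unfolding walk_count_def card_image[OF inj'] .
  then show ?thesis unfolding walk_stronger_def using le by blast
qed

lemma walk_stronger_by_edge_map:
  assumes fin: "finite E'" and inj: "inj_on \<phi> E" and into: "\<phi> ` E \<subseteq> E'"
    and walk: "\<And>F. F \<subseteq> E \<Longrightarrow> walk3 F s t \<Longrightarrow> walk3 (\<phi> ` F) s t"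
    and F1: "F1 \<subseteq> E" "\<not> walk3 F1 s t" "walk3 (\<phi> ` F1) s t"
  shows "walk_stronger E' E s t"
proof (rule walk_stronger_by_injection[OF fin])
  have inj_image: "inj_on (image \<phi>) (Pow E)" using inj by (rule inj_on_image_Pow)
  then show "inj_on (image \<phi>) (walk_sets E s t)"
    by (rule inj_on_subset) (auto simp: walk_sets_def)
  show "image \<phi> ` walk_sets E s t \<subseteq> walk_sets E' s t"
    using into walk unfolding walk_sets_def by blast
  show "card (\<phi> ` F) = card F" if "F \<in> walk_sets E s t" for F
    using that inj unfolding walk_sets_def by (auto intro: card_image inj_on_subset)
  have "\<phi> ` F1 \<noteq> \<phi> ` F" if "F \<in> walk_sets E s t" for F
    using that F1 inj_onD[OF inj_image, of F1 F] unfolding walk_sets_def by auto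
  then show "\<phi> ` F1 \<in> walk_sets E' s t - image \<phi> ` walk_sets E s t"
    using F1 into unfolding walk_sets_def by blast
qed

section \<open>Exchanging edges\<close>

definition improves :: "'a set \<Rightarrow> 'a \<Rightarrow> 'a \<Rightarrow> 'a set set \<Rightarrow> 'a set set \<Rightarrow> bool" where
  "improves V s t E' E \<longleftrightarrow> tt_graph V E' s t \<and> twins E' s t \<and> card E' = card E
     \<and> irr_edges E' s t \<subset> irr_edges E s t \<and> walk_stronger E' E s t"

lemma improves_by_twin_nbhd_edge:
  assumes G: "tt_graph V E s t" and tw: "twins E s t" and e: "e \<in> irr_edges E s t"
    and x: "x \<in> twin_nbhd E s t" and y: "y \<in> twin_nbhd E s t" and xy: "x \<noteq> y" "{x,y} \<notin> E"
  shows "improves V s t (insert {x,y} (E - {e})) E"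
proof -
  define E' where "E' = insert {x,y} (E - {e})"
  note xA = twin_nbhdD[OF G tw x] and yA = twin_nbhdD[OF G tw y]
  have es: "s \<notin> e" "t \<notin> e" "e \<in> E" using e unfolding irr_edges_def by auto
  have st: "s \<noteq> t" using G unfolding tt_graph_def by simp
  have finE: "finite E" using tt_graph_finite_edges[OF G] .
  have G': "tt_graph V E' s t" unfolding E'_def
    using tt_graph_insert_edge[OF tt_graph_subset[OF G] xA(1) yA(1) xy(1)] by blast
  have "card E > 0" using finE es(3) card_gt_0_iff by blast
  then have card: "card E' = card E" unfolding E'_def using xy(2) finE es(3) by simp
  have "{s,z} \<in> E' \<longleftrightarrow> {s,z} \<in> E" "{t,z} \<in> E' \<longleftrightarrow> {t,z} \<in> E" for z
    unfolding E'_def using es xA yA by auto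
  then have tw': "twins E' s t" and nbhd: "twin_nbhd E' s t = twin_nbhd E s t"
    using tw unfolding twins_def twin_nbhd_def by auto
  have "irr_edges E' s t \<subseteq> irr_edges E s t - {e}"
    using x y unfolding irr_edges_def nbhd by (auto simp: E'_def)
  then have irr: "irr_edges E' s t \<subset> irr_edges E s t" using e by blast
  define \<phi> where "\<phi> z = (if z = e then {x,y} else z)" for z
  have "walk_stronger E' E s t"
  proof (rule walk_stronger_by_edge_map[of E' \<phi>])
    show "finite E'" using tt_graph_finite_edges[OF G'] .
    show "inj_on \<phi> E" unfolding inj_on_def \<phi>_def using xy(2) by auto
    show "\<phi> ` E \<subseteq> E'" unfolding \<phi>_def E'_def by auto
    show "walk3 (\<phi> ` F) s t" if "F \<subseteq> E" "walk3 F s t" for F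
      using walk3_remove_irr_edge[OF tw that(1) e that(2)] by (rule walk3_mono) (auto simp: \<phi>_def)
    show "{{s,x}, e, {y,t}} \<subseteq> E" using xA yA es by auto
    have "{s,x} \<noteq> e" "{y,t} \<noteq> e" using es by auto
    then have "{{s,x}, e, {y,t}} - {e} = {{s,x},{y,t}}"
      and image: "\<phi> ` {{s,x}, e, {y,t}} = {{s,x},{x,y},{y,t}}" unfolding \<phi>_def by auto
    then show "\<not> walk3 {{s,x}, e, {y,t}} s t"
      using walk3_remove_irr_edge[OF tw \<open>{{s,x}, e, {y,t}} \<subseteq> E\<close> e]
        not_walk3_pendant_edges[OF xy(1) xA(3) yA(2) st] by auto
    show "walk3 (\<phi> ` {{s,x}, e, {y,t}}) s t" unfolding image by (rule walk3_three_edges)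
  qed
  then show ?thesis unfolding improves_def E'_def[symmetric] using G' tw' card irr by blast
qed

lemma irr_edge_far_vertex:
  assumes G: "tt_graph V E s t" and tw: "twins E s t" and e: "e \<in> irr_edges E s t"
  obtains w where "w \<in> V" "w \<noteq> s" "w \<noteq> t" "{s,w} \<notin> E" "{t,w} \<notin> E"
proof -
  have e': "e \<in> E" "s \<notin> e" "t \<notin> e" "\<not> e \<subseteq> twin_nbhd E s t"
    using e unfolding irr_edges_def by auto
  then obtain w where w: "w \<in> e" "w \<notin> twin_nbhd E s t" by blast
  obtain a b where "e = {a,b}" using G e'(1) unfolding tt_graph_def by blast
  then have "w \<in> V" using w tt_graph_edgeD[OF G] e'(1) by auto
  moreover have "w \<noteq> s" "w \<noteq> t" using w e' by auto
  moreover have "{s,w} \<notin> E" using w \<open>w \<noteq> t\<close> unfolding twin_nbhd_def by auto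
  moreover have "{t,w} \<notin> E" using calculation tw unfolding twins_def by blast
  ultimately show ?thesis using that by blast
qed

locale twin_exchange =
  fixes V :: "'a set" and E :: "'a set set" and s t :: 'a and e f :: "'a set" and w :: 'a
  assumes graph: "tt_graph V E s t" and twins: "twins E s t"
    and e_irr: "e \<in> irr_edges E s t"
    and f: "f \<in> E" "f \<noteq> e" "s \<notin> f" "t \<notin> f"
    and w: "w \<in> V" "w \<noteq> s" "w \<noteq> t" "{s,w} \<notin> E" "{t,w} \<notin> E"
begin

definition exchanged :: "'a set set" where
  "exchanged = insert {s,w} (insert {t,w} (E - {e,f}))"

definition swap :: "'a set \<Rightarrow> 'a set" where
  "swap z = (if z = e then {s,w} else if z = f then {t,w} else z)"

lemma s_neq_t: "s \<noteq> t"
  using graph unfolding tt_graph_def by blast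

lemma e_facts: "e \<in> E" "s \<notin> e" "t \<notin> e"
  using e_irr unfolding irr_edges_def by auto

lemma sw_neq_tw: "{s,w} \<noteq> {t,w}"
  using s_neq_t w by (auto simp: doubleton_eq_iff)

lemma walk3_if_sw_tw: "{s,w} \<in> G \<Longrightarrow> {t,w} \<in> G \<Longrightarrow> walk3 G s t"
  using walk3_mono[OF walk3_two_edges[of s w t], of G] by (simp add: insert_commute)

lemma tt_graph_exchanged: "tt_graph V exchanged s t"
proof -
  have "s \<in> V" "t \<in> V" using graph unfolding tt_graph_def by blast+
  then show ?thesis unfolding exchanged_def using w(1-3)
    by (intro tt_graph_insert_edge tt_graph_subset[OF graph]) auto
qed

lemma finite_exchanged: "finite exchanged"
  using tt_graph_finite_edges[OF tt_graph_exchanged] .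

lemma card_exchanged: "card exchanged = card E"
proof -
  have finE: "finite E" using tt_graph_finite_edges[OF graph] .
  have "card (E - {e,f}) = card E - 2" "card E \<ge> 2"
    using card_Diff_subset[of "{e,f}" E] card_mono[OF finE, of "{e,f}"] e_facts(1) f(1,2) finE by auto
  then show ?thesis unfolding exchanged_def using finE w(4,5) sw_neq_tw by simp
qed

lemma exchanged_at_terminal:
  "a = s \<or> a = t \<Longrightarrow> {a,x} \<in> exchanged \<longleftrightarrow> x = w \<or> {a,x} \<in> E"
  unfolding exchanged_def using e_facts f s_neq_t w by (auto simp: doubleton_eq_iff)

lemma twins_exchanged: "twins exchanged s t"
  using twins exchanged_at_terminal w unfolding twins_def by metis

lemma twin_nbhd_exchanged: "twin_nbhd exchanged s t = insert w (twin_nbhd E s t)"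
  using exchanged_at_terminal[of s] w unfolding twin_nbhd_def by auto

lemma irr_edges_exchanged: "irr_edges exchanged s t \<subset> irr_edges E s t"
proof -
  have "irr_edges exchanged s t \<subseteq> irr_edges E s t - {e}"
    unfolding irr_edges_def twin_nbhd_exchanged by (auto simp: exchanged_def)
  then show ?thesis using e_irr by blast
qed

lemma improves_if_walk_stronger:
  "walk_stronger exchanged E s t \<Longrightarrow> improves V s t exchanged E"
  unfolding improves_def
  using tt_graph_exchanged twins_exchanged card_exchanged irr_edges_exchanged by blast

lemma inj_on_swap: "inj_on swap E"
  unfolding inj_on_def swap_def using w(4,5) sw_neq_tw by auto

lemma swap_image_subset: "swap ` E \<subseteq> exchanged"
  unfolding swap_def exchanged_def by auto

lemma walk3_swap_image:
  assumes "F \<subseteq> E" "walk3 (F - {f}) s t"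
  shows "walk3 (swap ` F) s t"
proof -
  have "walk3 (F - {f} - {e}) s t"
    using walk3_remove_irr_edge[OF twins _ e_irr assms(2)] assms(1) by blast
  then show ?thesis by (rule walk3_mono) (force simp: swap_def)
qed

lemma improves_exchanging_irr_edges:
  assumes "f \<in> irr_edges E s t"
  shows "improves V s t exchanged E"
proof (rule improves_if_walk_stronger)
  have "swap ` {e,f} = {{s,w},{t,w}}" unfolding swap_def using f(2) by auto
  then have "walk3 (swap ` {e,f}) s t" by (intro walk3_if_sw_tw) simp_all
  moreover have "\<not> walk3 {e,f} s t"
    using walk3_edge_at_ends(1)[of "{e,f}" s t] e_facts(2) f(3) by auto
  moreover have "walk3 (swap ` F) s t" if "F \<subseteq> E" "walk3 F s t" for F
    using that walk3_swap_image walk3_remove_irr_edge[OF twins _ assms] by blast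
  moreover have "{e,f} \<subseteq> E" using e_facts f by blast
  ultimately show "walk_stronger exchanged E s t"
    using walk_stronger_by_edge_map[OF finite_exchanged inj_on_swap swap_image_subset] by blast
qed

end

locale twin_exchange_clique = twin_exchange +
  fixes u v :: 'a
  assumes f_eq: "f = {u,v}"
    and u: "u \<in> twin_nbhd E s t" and v: "v \<in> twin_nbhd E s t"
begin

lemma uv_facts: "u \<noteq> s" "u \<noteq> t" "v \<noteq> s" "v \<noteq> t" "u \<noteq> w" "v \<noteq> w" "u \<noteq> v"
  "{s,u} \<in> E" "{s,v} \<in> E" "{u,t} \<in> E" "{v,t} \<in> E"
  using twin_nbhdD[OF graph twins u] twin_nbhdD[OF graph twins v] w(4)
    tt_graph_edgeD(3)[OF graph, of u v] f(1) f_eq by auto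

definition lost :: "'a set set \<Rightarrow> bool" where
  "lost F \<longleftrightarrow> F \<subseteq> E \<and> walk3 F s t \<and> \<not> walk3 (swap ` F) s t"

text \<open>
  A pathset lost under swap reaches t only along s-u-v-t or s-v-u-t (lemma lostD);
  reroute trades f and the first edge of that walk for sw and tw.  Whether vt survives
  tells which first edge was removed, which makes reroute injective.
\<close>

definition entry_edge :: "'a set set \<Rightarrow> 'a set" where
  "entry_edge F = (if {s,u} \<in> F \<and> {v,t} \<in> F then {s,u} else {s,v})"

definition reroute :: "'a set set \<Rightarrow> 'a set set" where
  "reroute F = insert {s,w} (insert {t,w} (F - {f, entry_edge F}))"

definition transfer :: "'a set set \<Rightarrow> 'a set set" where
  "transfer F = (if walk3 (swap ` F) s t then swap ` F else reroute F)"

lemma lostD: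
  assumes "lost F"
  shows "f \<in> F" "e \<notin> F" "\<not> walk3 (F - {f}) s t" "entry_edge F \<in> F"
    "entry_edge F = {s,u} \<Longrightarrow> {v,t} \<in> F \<and> {u,t} \<notin> F"
    "entry_edge F = {s,v} \<Longrightarrow> {u,t} \<in> F \<and> {v,t} \<notin> F"
proof -
  have F: "F \<subseteq> E" "walk3 F s t" "\<not> walk3 (swap ` F) s t"
    using assms unfolding lost_def by auto
  show no_walk: "\<not> walk3 (F - {f}) s t" using walk3_swap_image[OF F(1)] F(3) by auto
  then show "f \<in> F" using F(2) by (cases "f \<in> F") simp_all
  show "e \<notin> F"
  proof
    assume "e \<in> F"
    then have "{s,w} \<in> swap ` F" "{t,w} \<in> swap ` F"
      using \<open>f \<in> F\<close> image_eqI[of _ swap] by (simp_all add: swap_def f(2))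
    then show False using F(3) walk3_if_sw_tw[of "swap ` F"] by simp
  qed
  have no_shortcut: "{a,t} \<notin> F" if "{s,a} \<in> F" "a \<in> {u,v}" for a
  proof
    assume "{a,t} \<in> F"
    then have "{{s,a},{a,t}} \<subseteq> F - {f}" using that f(3,4) by auto
    then show False using walk3_mono[OF walk3_two_edges[of s a t]] no_walk by simp
  qed
  have "{s,u} \<noteq> {s,v}" using uv_facts(7) by (simp add: doubleton_eq_iff)
  moreover have "({s,u} \<in> F \<and> {v,t} \<in> F) \<or> ({s,v} \<in> F \<and> {u,t} \<in> F)"
    using walk3_through_edge[OF F(2) uv_facts(1-4)] no_walk unfolding f_eq by simp
  ultimately consider "{s,u} \<in> F" "{v,t} \<in> F" "entry_edge F = {s,u}" "entry_edge F \<noteq> {s,v}"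
    | "{s,v} \<in> F" "{u,t} \<in> F" "entry_edge F = {s,v}" "entry_edge F \<noteq> {s,u}"
    unfolding entry_edge_def by (cases "{s,u} \<in> F \<and> {v,t} \<in> F") simp_all
  then show "entry_edge F \<in> F"
    "entry_edge F = {s,u} \<Longrightarrow> {v,t} \<in> F \<and> {u,t} \<notin> F"
    "entry_edge F = {s,v} \<Longrightarrow> {u,t} \<in> F \<and> {v,t} \<notin> F"
    using no_shortcut[of u] no_shortcut[of v] by (cases; simp)+
qed

lemma entry_edge_cases: "entry_edge F = {s,u} \<or> entry_edge F = {s,v}"
  unfolding entry_edge_def by simp

lemma lost_no_walk_without_entry_edge:
  assumes "lost F"
  shows "\<not> walk3 (F - {entry_edge F}) s t"
proof
  assume "walk3 (F - {entry_edge F}) s t"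
  then have "walk3 (F - {entry_edge F} - {f}) s t
      \<or> ({s,u} \<in> F - {entry_edge F} \<and> {v,t} \<in> F - {entry_edge F})
      \<or> ({s,v} \<in> F - {entry_edge F} \<and> {u,t} \<in> F - {entry_edge F})"
    using walk3_through_edge[of "F - {entry_edge F}", OF _ uv_facts(1-4)] unfolding f_eq by blast
  moreover have "\<not> walk3 (F - {entry_edge F} - {f}) s t"
    using lostD(3)[OF assms] walk3_mono[of "F - {entry_edge F} - {f}" s t "F - {f}"] by blast
  ultimately show False using entry_edge_cases[of F] lostD(5,6)[OF assms] by auto
qed

lemma lost_subset: "lost F \<Longrightarrow> F \<subseteq> E"
  unfolding lost_def by blast

lemma f_neq_entry_edge: "f \<noteq> entry_edge F"
  using f(3) entry_edge_cases[of F] by auto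

lemma reroute_walk_set:
  assumes "lost F"
  shows "reroute F \<in> walk_sets exchanged s t"
proof -
  have "F - {f, entry_edge F} \<subseteq> E - {e,f}" using lost_subset[OF assms] lostD(2)[OF assms] by auto
  then have "reroute F \<subseteq> exchanged" unfolding reroute_def exchanged_def by auto
  moreover have "walk3 (reroute F) s t" by (rule walk3_if_sw_tw) (simp_all add: reroute_def)
  ultimately show ?thesis unfolding walk_sets_def by simp
qed

lemma card_reroute:
  assumes "lost F"
  shows "card (reroute F) = card F"
proof -
  have F: "F \<subseteq> E" using lost_subset[OF assms] .
  then have fin: "finite F" using finite_subset tt_graph_finite_edges[OF graph] by auto
  have sub: "{f, entry_edge F} \<subseteq> F" using lostD(1,4)[OF assms] by simp
  have "card {f, entry_edge F} = 2" using f_neq_entry_edge[of F] by simp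
  then have "card (F - {f, entry_edge F}) = card F - 2" "card F \<ge> 2"
    using card_Diff_subset[OF _ sub] card_mono[OF fin sub] by simp_all
  moreover have "{s,w} \<notin> F" "{t,w} \<notin> F" using F w(4,5) by auto
  ultimately show ?thesis unfolding reroute_def using fin sw_neq_tw by simp
qed

lemma reroute_inverse:
  assumes "lost F"
  shows "insert f (insert (if {v,t} \<in> reroute F then {s,u} else {s,v}) (reroute F - {{s,w},{t,w}})) = F"
proof -
  have "s \<notin> {v,t}" using uv_facts(3) s_neq_t by simp
  then have "{v,t} \<noteq> {s,w}" "{v,t} \<noteq> entry_edge F" using entry_edge_cases[of F] by auto
  moreover have "{v,t} \<noteq> {t,w}" using uv_facts(4,6) by (simp add: doubleton_eq_iff)
  moreover have "{v,t} \<noteq> f" using f(4) by auto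
  ultimately have "{v,t} \<in> reroute F \<longleftrightarrow> {v,t} \<in> F" unfolding reroute_def by simp
  then have entry_edge: "(if {v,t} \<in> reroute F then {s,u} else {s,v}) = entry_edge F"
    using lostD(5,6)[OF assms] entry_edge_cases[of F] by metis
  have "{s,w} \<notin> F" "{t,w} \<notin> F" using lost_subset[OF assms] w(4,5) by auto
  then have "reroute F - {{s,w},{t,w}} = F - {f, entry_edge F}" unfolding reroute_def by auto
  then show ?thesis unfolding entry_edge using lostD(1,4)[OF assms] by auto
qed

lemma swap_image_neq_reroute:
  assumes "lost F" "G \<in> walk_sets E s t"
  shows "swap ` G \<noteq> reroute F"
proof
  assume eq: "swap ` G = reroute F"
  have G: "G \<subseteq> E" "walk3 G s t" using assms(2) unfolding walk_sets_def by auto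
  have "G - {e} \<subseteq> F - {entry_edge F}"
  proof
    fix y assume y: "y \<in> G - {e}"
    show "y \<in> F - {entry_edge F}"
    proof (cases "y = f")
      case True
      then show ?thesis using lostD(1)[OF assms(1)] f_neq_entry_edge[of F] by simp
    next
      case False
      then have "swap y = y" using y unfolding swap_def by simp
      then have "y \<in> reroute F" using y eq image_eqI[of y swap y G] by simp
      moreover have "y \<noteq> {s,w}" "y \<noteq> {t,w}" using y G(1) w(4,5) by auto
      ultimately show ?thesis using False unfolding reroute_def by simp
    qed
  qed
  then have "walk3 (F - {entry_edge F}) s t"
    using walk3_mono[OF walk3_remove_irr_edge[OF twins G(1) e_irr G(2)]] by simp
  then show False using lost_no_walk_without_entry_edge[OF assms(1)] by simp
qed

lemma transfer_walk_set:
  assumes "F \<in> walk_sets E s t"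
  shows "transfer F \<in> walk_sets exchanged s t \<and> card (transfer F) = card F"
proof (cases "walk3 (swap ` F) s t")
  case True
  have "F \<subseteq> E" using assms unfolding walk_sets_def by simp
  then have "swap ` F \<subseteq> exchanged" "card (swap ` F) = card F"
    using swap_image_subset card_image[OF inj_on_subset[OF inj_on_swap \<open>F \<subseteq> E\<close>]] by auto
  then show ?thesis using True unfolding transfer_def walk_sets_def by simp
next
  case False
  then have "lost F" using assms unfolding lost_def walk_sets_def by simp
  then show ?thesis using False reroute_walk_set card_reroute unfolding transfer_def by simp
qed

lemma inj_on_transfer: "inj_on transfer (walk_sets E s t)"
proof (rule inj_onI)
  fix F G assume F: "F \<in> walk_sets E s t" and G: "G \<in> walk_sets E s t"
    and eq: "transfer F = transfer G"
  have lost_iff: "lost H \<longleftrightarrow> \<not> walk3 (swap ` H) s t" if "H \<in> walk_sets E s t" for H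
    using that unfolding lost_def walk_sets_def by simp
  show "F = G"
  proof (cases "lost F"; cases "lost G")
    assume "lost F" "lost G"
    then have "reroute F = reroute G" using eq lost_iff F G unfolding transfer_def by simp
    then show ?thesis
      using reroute_inverse[OF \<open>lost F\<close>] reroute_inverse[OF \<open>lost G\<close>] by metis
  next
    assume "lost F" "\<not> lost G"
    then have "swap ` G = reroute F" using eq lost_iff F G unfolding transfer_def by simp
    then show ?thesis using swap_image_neq_reroute[OF \<open>lost F\<close> G] by simp
  next
    assume "\<not> lost F" "lost G"
    then have "swap ` F = reroute G" using eq lost_iff F G unfolding transfer_def by simp
    then show ?thesis using swap_image_neq_reroute[OF \<open>lost G\<close> F] by simp
  next
    assume "\<not> lost F" "\<not> lost G"
    then have "swap ` F = swap ` G" using eq lost_iff F G unfolding transfer_def by simp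
    moreover have "F \<in> Pow E" "G \<in> Pow E" using F G unfolding walk_sets_def by auto
    ultimately show ?thesis by (rule inj_onD[OF inj_on_image_Pow[OF inj_on_swap]])
  qed
qed

lemma transfer_misses_sw_tw: "{{s,w},{t,w}} \<notin> transfer ` walk_sets E s t"
proof
  assume "{{s,w},{t,w}} \<in> transfer ` walk_sets E s t"
  then obtain F where F: "F \<subseteq> E" "walk3 F s t" "transfer F = {{s,w},{t,w}}"
    unfolding walk_sets_def by auto
  show False
  proof (cases "walk3 (swap ` F) s t")
    case True
    then have "swap ` F = {{s,w},{t,w}}" using F(3) unfolding transfer_def by simp
    have "z \<in> {e,f}" if "z \<in> F" for z
    proof (rule ccontr)
      assume "z \<notin> {e,f}"
      then have "z \<in> swap ` F" using that image_eqI[of z swap z F] unfolding swap_def by auto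
      then show False using \<open>swap ` F = {{s,w},{t,w}}\<close> that F(1) w(4,5) by auto
    qed
    then have "F \<subseteq> {e,f}" by blast
    then show False using walk3_edge_at_ends(1)[OF F(2)] e_facts(2) f(3) by auto
  next
    case False
    then have "reroute F = {{s,w},{t,w}}" using F(3) unfolding transfer_def by simp
    have "z \<in> {f, entry_edge F}" if "z \<in> F" for z
    proof (rule ccontr)
      assume "z \<notin> {f, entry_edge F}"
      then have "z \<in> reroute F" using that unfolding reroute_def by simp
      then show False using \<open>reroute F = {{s,w},{t,w}}\<close> that F(1) w(4,5) by auto
    qed
    then have "F \<subseteq> {f, entry_edge F}" by blast
    moreover have "t \<notin> entry_edge F" using entry_edge_cases[of F] uv_facts(2,4) s_neq_t by auto
    ultimately show False using walk3_edge_at_ends(2)[OF F(2)] f(4) by auto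
  qed
qed

lemma improves_exchanging_clique_edge: "improves V s t exchanged E"
proof (rule improves_if_walk_stronger)
  have "{{s,w},{t,w}} \<in> walk_sets exchanged s t"
    unfolding walk_sets_def exchanged_def using walk3_if_sw_tw[of "{{s,w},{t,w}}"] by simp
  then show "walk_stronger exchanged E s t"
    using transfer_walk_set transfer_misses_sw_tw
    by (intro walk_stronger_by_injection[OF finite_exchanged inj_on_transfer,
        where F' = "{{s,w},{t,w}}"]) auto
qed

end

lemma card_le_4_if_small_twin_nbhd:
  assumes G: "tt_graph V E s t" and tw: "twins E s t"
    and "twin_nbhd E s t \<subseteq> {x}" and "irr_edges E s t \<subseteq> {e}"
  shows "card E \<le> 4"
proof -
  have "E \<subseteq> {{s,t}, e, {s,x}, {t,x}}"
  proof
    fix z assume "z \<in> E"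
    from G tw this show "z \<in> {{s,t}, e, {s,x}, {t,x}}"
    proof (cases rule: twin_graph_edge_cases)
      case 3
      obtain a b where "z = {a,b}" "a \<noteq> b" using G \<open>z \<in> E\<close> unfolding tt_graph_def by blast
      then show ?thesis using 3 assms(3) by auto
    qed (use assms(3,4) in auto)
  qed
  moreover have "card {{s,t}, e, {s,x}, {t,x}} \<le> 4"
    using card_length[of "[{s,t}, e, {s,x}, {t,x}]"] by simp
  ultimately show ?thesis using card_mono[of "{{s,t}, e, {s,x}, {t,x}}" E] by simp
qed

lemma improves_by_two_irr_edges:
  assumes G: "tt_graph V E s t" and tw: "twins E s t"
    and e: "e \<in> irr_edges E s t" and f_irr: "f \<in> irr_edges E s t" "f \<noteq> e"
  shows "\<exists>E'. improves V s t E' E"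
proof -
  obtain w where "w \<in> V" "w \<noteq> s" "w \<noteq> t" "{s,w} \<notin> E" "{t,w} \<notin> E"
    using irr_edge_far_vertex[OF G tw e] by blast
  moreover have "f \<in> E" "s \<notin> f" "t \<notin> f" using f_irr(1) unfolding irr_edges_def by auto
  ultimately interpret twin_exchange V E s t e f w
    by unfold_locales (use G tw e f_irr(2) in auto)
  show ?thesis using improves_exchanging_irr_edges[OF f_irr(1)] by blast
qed

lemma improves_by_clique_edge:
  assumes G: "tt_graph V E s t" and tw: "twins E s t" and e: "e \<in> irr_edges E s t"
    and uv: "u \<in> twin_nbhd E s t" "v \<in> twin_nbhd E s t" "{u,v} \<in> E"
  shows "\<exists>E'. improves V s t E' E"
proof -
  obtain w where "w \<in> V" "w \<noteq> s" "w \<noteq> t" "{s,w} \<notin> E" "{t,w} \<notin> E"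
    using irr_edge_far_vertex[OF G tw e] by blast
  moreover have "{u,v} \<noteq> e" using e uv(1,2) unfolding irr_edges_def by auto
  moreover note twin_nbhdD[OF G tw uv(1)] twin_nbhdD[OF G tw uv(2)]
  ultimately interpret twin_exchange_clique V E s t e "{u,v}" w u v
    by unfold_locales (use G tw e uv in auto)
  show ?thesis using improves_exchanging_clique_edge by blast
qed

lemma improvement_exists:
  assumes G: "tt_graph V E s t" and tw: "twins E s t" and big: "card E \<ge> 5"
    and e: "e \<in> irr_edges E s t"
  shows "\<exists>E'. improves V s t E' E"
proof (cases "\<exists>f \<in> irr_edges E s t. f \<noteq> e")
  case True
  then show ?thesis using improves_by_two_irr_edges[OF G tw e] by blast
next
  case single_irr: False
  let ?A = "twin_nbhd E s t"
  show ?thesis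
  proof (cases "\<exists>u\<in>?A. \<exists>v\<in>?A. u \<noteq> v")
    case True
    then obtain u v where uv: "u \<in> ?A" "v \<in> ?A" "u \<noteq> v" by blast
    show ?thesis
    proof (cases "{u,v} \<in> E")
      case True
      then show ?thesis using improves_by_clique_edge[OF G tw e uv(1,2)] by blast
    next
      case False
      then show ?thesis using improves_by_twin_nbhd_edge[OF G tw e uv] by blast
    qed
  next
    case False
    then obtain x where "?A \<subseteq> {x}" by (cases "?A = {}") auto
    moreover have "irr_edges E s t \<subseteq> {e}" using single_irr by blast
    ultimately have "card E \<le> 4" by (rule card_le_4_if_small_twin_nbhd[OF G tw])
    then show ?thesis using big by simp
  qed
qed

lemma exists_stronger_without_irr_edges:
  assumes "tt_graph V E s t" "twins E s t" "card E \<ge> 5" "irr_edges E s t \<noteq> {}"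
  shows "\<exists>E'. tt_graph V E' s t \<and> twins E' s t \<and> card E' = card E \<and> irr_edges E' s t = {}
    \<and> walk_stronger E' E s t"
  using assms
proof (induction "card (irr_edges E s t)" arbitrary: E rule: less_induct)
  case less
  obtain e where "e \<in> irr_edges E s t" using less.prems(4) by blast
  then obtain E1 where "improves V s t E1 E"
    using improvement_exists[OF less.prems(1-3)] by blast
  then have E1: "tt_graph V E1 s t" "twins E1 s t" "card E1 = card E"
    "irr_edges E1 s t \<subset> irr_edges E s t" "walk_stronger E1 E s t"
    unfolding improves_def by auto
  have "finite (irr_edges E s t)"
    using tt_graph_finite_edges[OF less.prems(1)] unfolding irr_edges_def by simp
  then have fewer: "card (irr_edges E1 s t) < card (irr_edges E s t)"
    using E1(4) by (rule psubset_card_mono)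
  show ?case
  proof (cases "irr_edges E1 s t = {}")
    case True
    then show ?thesis using E1 by (intro exI[of _ E1]) simp
  next
    case False
    have "card E1 \<ge> 5" using E1(3) less.prems(3) by simp
    then obtain E2 where E2: "tt_graph V E2 s t" "twins E2 s t" "card E2 = card E1"
      "irr_edges E2 s t = {}" "walk_stronger E2 E1 s t"
      using less.hyps[OF fewer E1(1,2) _ False] by blast
    have "walk_stronger E2 E s t" by (rule walk_stronger_trans[OF E1(5) E2(5)])
    then show ?thesis using E2(1-4) E1(3) by (intro exI[of _ E2]) simp
  qed
qed

theorem lemma9:
  fixes V :: "'a set" and E :: "'a set set" and s t :: 'a and n m :: nat
  assumes "n \<ge> 5" and "m \<ge> 5"
    and "tt_graph V E s t" and "card V = n" and "card E = m"
    and "true_twins V E s t"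
    and "\<exists>e. irrelevant_edge 3 E s t e"
  shows "\<exists>E' s' t'. tt_graph V E' s' t' \<and> card E' = m \<and> true_twins V E' s' t'
           \<and> (\<forall>e. \<not> irrelevant_edge 3 E' s' t' e)
           \<and> stronger 3 m E' s' t' E s t"
proof -
  have tw: "twins E s t" using assms(6) true_twins_iff_twins[OF assms(3)] by simp
  have "irr_edges E s t \<noteq> {}"
    using assms(7) irrelevant_edge_in_irr_edges[OF assms(3) tw] by blast
  then obtain E' where E': "tt_graph V E' s t" "twins E' s t" "card E' = m"
      "irr_edges E' s t = {}" "walk_stronger E' E s t"
    using exists_stronger_without_irr_edges[OF assms(3) tw] assms(2,5) by auto
  have "true_twins V E' s t" using E'(2) true_twins_iff_twins[OF E'(1)] by simp
  moreover have "\<forall>e. \<not> irrelevant_edge 3 E' s t e"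
    using irrelevant_edge_in_irr_edges[OF E'(1,2)] E'(4) by blast
  moreover have "stronger 3 m E' s t E s t"
    by (rule stronger_if_walk_stronger[OF assms(3) E'(1,3,5)])
  ultimately show ?thesis using E'(1,3) by (intro exI[of _ E'] exI[of _ s] exI[of _ t]) simp
qed

end
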